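(* Let $(Q,P)$ be a weakly quasi-lattice ordered group and let $\Lambda$ be a finitely aligned $P$-graph. Then the collection of sets $Z(\mu\setminus K)=\{x\in\mathcal{F}(\Lambda):\mu\in x,\ x\cap K=\emptyset\}$, where $\mu\in\Lambda$ and $K\subseteq\mu\Lambda$ is finite, is a basis for the topology of $\mathcal{F}(\Lambda)$.
   Context: $(Q,P)$ weakly quasi-lattice ordered: $Q$ a discrete group, $P\subseteq Q$ a subsemigroup containing the identity $e$ with $P\cap P^{-1}=\{e\}$, and, with $p\le r$ meaning $pq=r$ for some $q\in P$, any two elements of $P$ with a common upper bound have a least common upper bound. A $P$-graph is a countable small category $\Lambda$ (range/source $r,s$) with a functor $d:\Lambda\to P$ with unique factorisation (if $d(\lambda)=pq$ there are unique $\mu,\nu$ with $\lambda=\mu\nu$, $d(\mu)=p$, $d(\nu)=q$). Write $\lambda\Lambda=\{\lambda\mu: s(\lambda)=r(\mu)\}$, $\mu\preceq\lambda$ iff $\lambda\in\mu\Lambda$. $\Lambda$ is finitely aligned if for all $\mu,\nu\in\Lambda$ there is a finite (possibly empty) $J\subseteq\Lambda$ with $\mu\Lambda\cap\nu\Lambda=\bigcup_{\kappa\in J}\kappa\Lambda$. A filter is a nonempty hereditary and directed subset of $\Lambda$ (w.r.t. $\preceq$); $\mathcal{F}(\Lambda)$ is the set of filters, with the subspace topology from $\mathcal{P}(\Lambda)\cong\{0,1\}^\Lambda$ carrying the product topology (basis $\{x: K_1\subseteq x\subseteq\Lambda\setminus K_2\}$, $K_1,K_2$ finite). *)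

theory Defs
  imports "HOL-Analysis.Analysis" "HOL-Algebra.Group"
begin

definition pleq :: "('q, 'b) monoid_scheme \<Rightarrow> 'q set \<Rightarrow> 'q \<Rightarrow> 'q \<Rightarrow> bool" where
  "pleq G P p r \<longleftrightarrow> (\<exists>q\<in>P. p \<otimes>\<^bsub>G\<^esub> q = r)"

definition wqlo :: "('q, 'b) monoid_scheme \<Rightarrow> 'q set \<Rightarrow> bool" where
  "wqlo G P \<longleftrightarrow> group G \<and> P \<subseteq> carrier G \<and> \<one>\<^bsub>G\<^esub> \<in> P
     \<and> (\<forall>p\<in>P. \<forall>q\<in>P. p \<otimes>\<^bsub>G\<^esub> q \<in> P)
     \<and> P \<inter> (\<lambda>p. inv\<^bsub>G\<^esub> p) ` P = {\<one>\<^bsub>G\<^esub>}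
     \<and> (\<forall>p\<in>P. \<forall>r\<in>P. (\<exists>u\<in>P. pleq G P p u \<and> pleq G P r u) \<longrightarrow>
          (\<exists>l\<in>P. pleq G P p l \<and> pleq G P r l \<and>
              (\<forall>u\<in>P. pleq G P p u \<and> pleq G P r u \<longrightarrow> pleq G P l u)))"

text \<open>A small category with object set obj, morphism set mor, range rng, source src,
  identities idt and composition cmp (cmp m n defined when src m = rng n),
  together with a degree map deg into the group.\<close>

record ('o, 'a, 'q) pgraph =
  obj :: "'o set"
  mor :: "'a set"
  rng :: "'a \<Rightarrow> 'o"
  src :: "'a \<Rightarrow> 'o"
  idt :: "'o \<Rightarrow> 'a"
  cmp :: "'a \<Rightarrow> 'a \<Rightarrow> 'a"
  deg :: "'a \<Rightarrow> 'q"

definition small_category :: "('o, 'a, 'q, 'c) pgraph_scheme \<Rightarrow> bool" where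
  "small_category L \<longleftrightarrow>
     (\<forall>m\<in>mor L. rng L m \<in> obj L \<and> src L m \<in> obj L)
   \<and> (\<forall>v\<in>obj L. idt L v \<in> mor L \<and> rng L (idt L v) = v \<and> src L (idt L v) = v)
   \<and> (\<forall>m\<in>mor L. \<forall>n\<in>mor L. src L m = rng L n \<longrightarrow>
        cmp L m n \<in> mor L \<and> rng L (cmp L m n) = rng L m \<and> src L (cmp L m n) = src L n)
   \<and> (\<forall>m\<in>mor L. \<forall>n\<in>mor L. \<forall>k\<in>mor L. src L m = rng L n \<and> src L n = rng L k \<longrightarrow>
        cmp L (cmp L m n) k = cmp L m (cmp L n k))
   \<and> (\<forall>m\<in>mor L. cmp L (idt L (rng L m)) m = m \<and> cmp L m (idt L (src L m)) = m)"

definition P_graph :: "('q, 'b) monoid_scheme \<Rightarrow> 'q set \<Rightarrow> ('o, 'a, 'q, 'c) pgraph_scheme \<Rightarrow> bool" where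
  "P_graph G P L \<longleftrightarrow> small_category L \<and> countable (obj L) \<and> countable (mor L)
   \<and> (\<forall>m\<in>mor L. deg L m \<in> P)
   \<and> (\<forall>v\<in>obj L. deg L (idt L v) = \<one>\<^bsub>G\<^esub>)
   \<and> (\<forall>m\<in>mor L. \<forall>n\<in>mor L. src L m = rng L n \<longrightarrow>
        deg L (cmp L m n) = deg L m \<otimes>\<^bsub>G\<^esub> deg L n)
   \<and> (\<forall>l\<in>mor L. \<forall>p\<in>P. \<forall>q\<in>P. deg L l = p \<otimes>\<^bsub>G\<^esub> q \<longrightarrow>
        (\<exists>!(m, n). m \<in> mor L \<and> n \<in> mor L \<and> src L m = rng L n \<and>
              l = cmp L m n \<and> deg L m = p \<and> deg L n = q))"

text \<open>\<open>ext L m\<close> is the set m\<Lambda>.\<close>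
definition ext :: "('o, 'a, 'q, 'c) pgraph_scheme \<Rightarrow> 'a \<Rightarrow> 'a set" where
  "ext L m = {cmp L m n | n. n \<in> mor L \<and> src L m = rng L n}"

definition prec :: "('o, 'a, 'q, 'c) pgraph_scheme \<Rightarrow> 'a \<Rightarrow> 'a \<Rightarrow> bool" where
  "prec L m l \<longleftrightarrow> l \<in> ext L m"

definition finitely_aligned :: "('o, 'a, 'q, 'c) pgraph_scheme \<Rightarrow> bool" where
  "finitely_aligned L \<longleftrightarrow> (\<forall>m\<in>mor L. \<forall>n\<in>mor L. \<exists>J. finite J \<and> J \<subseteq> mor L \<and>
      ext L m \<inter> ext L n = (\<Union>k\<in>J. ext L k))"

definition pg_filter :: "('o, 'a, 'q, 'c) pgraph_scheme \<Rightarrow> 'a set \<Rightarrow> bool" where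
  "pg_filter L x \<longleftrightarrow> x \<subseteq> mor L \<and> x \<noteq> {}
     \<and> (\<forall>l\<in>x. \<forall>m\<in>mor L. prec L m l \<longrightarrow> m \<in> x)
     \<and> (\<forall>m\<in>x. \<forall>n\<in>x. \<exists>l\<in>x. prec L m l \<and> prec L n l)"

definition filters :: "('o, 'a, 'q, 'c) pgraph_scheme \<Rightarrow> 'a set set" where
  "filters L = {x. pg_filter L x}"

text \<open>Product topology on the power set of A, via P(A) \<cong> {0,1}^A.\<close>
definition powtop :: "'a set \<Rightarrow> 'a set topology" where
  "powtop A = pullback_topology (Pow A) (\<lambda>x. restrict (\<lambda>l. l \<in> x) A)
      (product_topology (\<lambda>_. discrete_topology (UNIV :: bool set)) A)"

definition filtertop :: "('o, 'a, 'q, 'c) pgraph_scheme \<Rightarrow> 'a set topology" where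
  "filtertop L = subtopology (powtop (mor L)) (filters L)"

definition Zset :: "('o, 'a, 'q, 'c) pgraph_scheme \<Rightarrow> 'a \<Rightarrow> 'a set \<Rightarrow> 'a set set" where
  "Zset L m K = {x \<in> filters L. m \<in> x \<and> x \<inter> K = {}}"

end

theory Submission
  imports Defs
begin

text \<open>The product topology on \<open>\<P>(\<Lambda>)\<close> has the cylinders \<open>{x. K\<^sub>1 \<subseteq> x \<subseteq> \<Lambda> - K\<^sub>2}\<close> as a
  basis. Given a filter \<open>x\<close> in such a cylinder, directedness yields a single \<open>\<mu> \<in> x\<close> above
  all of \<open>K\<^sub>1\<close>, and every filter containing \<open>\<mu>\<close> contains \<open>K\<^sub>1\<close>. For a filter \<open>y \<ni> \<mu>\<close>, an
  element \<open>\<nu>\<close> lies in \<open>y\<close> iff \<open>y\<close> meets \<open>\<mu>\<Lambda> \<inter> \<nu>\<Lambda>\<close>. By finite alignment, the union of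
  these sets over \<open>\<nu> \<in> K\<^sub>2\<close> is the union of the \<open>\<kappa>\<Lambda>\<close> over a finite \<open>J \<subseteq> \<mu>\<Lambda>\<close>, so for
  filters containing \<open>\<mu>\<close> avoiding \<open>K\<^sub>2\<close> amounts to avoiding \<open>J\<close>.\<close>

definition cylinder :: "'a set \<Rightarrow> 'a set \<Rightarrow> 'a set \<Rightarrow> 'a set set" where
  "cylinder A K\<^sub>1 K\<^sub>2 = {x \<in> Pow A. K\<^sub>1 \<subseteq> x \<and> x \<inter> K\<^sub>2 = {}}"

lemma powtop_preimage_PiE:
  "{x \<in> Pow A. restrict (\<lambda>l. l \<in> x) A \<in> PiE A U} = {x \<in> Pow A. \<forall>i\<in>A. (i \<in> x) \<in> U i}"
  by (auto simp: PiE_iff)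

lemma openin_powtop_cylinder:
  assumes "finite K\<^sub>1" "finite K\<^sub>2" "K\<^sub>1 \<subseteq> A"
  shows "openin (powtop A) (cylinder A K\<^sub>1 K\<^sub>2)"
proof -
  define U where "U i = {b. (i \<in> K\<^sub>1 \<longrightarrow> b) \<and> (i \<in> K\<^sub>2 \<longrightarrow> \<not> b)}" for i
  have "{i \<in> A. U i \<noteq> UNIV} \<subseteq> K\<^sub>1 \<union> K\<^sub>2"
    by (auto simp: U_def)
  then have "openin (product_topology (\<lambda>_. discrete_topology UNIV) A) (PiE A U)"
    using assms by (auto simp: openin_PiE_gen intro: finite_subset)
  moreover have "cylinder A K\<^sub>1 K\<^sub>2 = {x \<in> Pow A. restrict (\<lambda>l. l \<in> x) A \<in> PiE A U}"
    unfolding powtop_preimage_PiE using assms(3) by (auto simp: cylinder_def U_def)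
  ultimately show ?thesis
    unfolding powtop_def openin_pullback_topology by blast
qed

lemma powtop_cylinder_nbhd:
  assumes "openin (powtop A) V" "x \<in> V"
  obtains K\<^sub>1 K\<^sub>2 where "finite K\<^sub>1" "finite K\<^sub>2" "x \<in> cylinder A K\<^sub>1 K\<^sub>2" "cylinder A K\<^sub>1 K\<^sub>2 \<subseteq> V"
proof -
  define ind where "ind y = restrict (\<lambda>l. l \<in> y) A" for y :: "'a set"
  obtain W where W: "openin (product_topology (\<lambda>_. discrete_topology UNIV) A) W"
    and V: "V = ind -` W \<inter> Pow A"
    using assms(1) unfolding powtop_def openin_pullback_topology ind_def by blast
  obtain U where fin: "finite {i \<in> A. U i \<noteq> UNIV}"
    and x: "ind x \<in> PiE A U" and sub: "PiE A U \<subseteq> W"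
    using W assms(2) V unfolding openin_product_topology_alt by auto
  define F where "F = {i \<in> A. U i \<noteq> UNIV}"
  show thesis
  proof
    show "finite (F \<inter> x)" "finite (F - x)"
      using fin by (auto simp: F_def)
    show "x \<in> cylinder A (F \<inter> x) (F - x)"
      using assms(2) V by (auto simp: cylinder_def)
    have agree: "ind y \<in> PiE A U" if "y \<in> cylinder A (F \<inter> x) (F - x)" for y
    proof -
      have "(i \<in> y) \<in> U i" if "i \<in> A" for i
      proof (cases "i \<in> F")
        case True
        with \<open>y \<in> cylinder A (F \<inter> x) (F - x)\<close> have "(i \<in> y) = (i \<in> x)"
          by (auto simp: cylinder_def)
        with x \<open>i \<in> A\<close> show ?thesis by (auto simp: ind_def PiE_iff)
      qed (use \<open>i \<in> A\<close> in \<open>auto simp: F_def\<close>)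
      then show ?thesis
        using powtop_preimage_PiE[of A U] that by (auto simp: ind_def cylinder_def)
    qed
    show "cylinder A (F \<inter> x) (F - x) \<subseteq> V"
    proof
      fix y assume y: "y \<in> cylinder A (F \<inter> x) (F - x)"
      then have "ind y \<in> W"
        using agree sub by blast
      with y show "y \<in> V"
        unfolding V by (auto simp: cylinder_def)
    qed
  qed
qed

lemma pg_filter_subset_mor: "pg_filter L y \<Longrightarrow> y \<subseteq> mor L"
  by (simp add: pg_filter_def)

lemma pg_filter_prec_closed: "pg_filter L y \<Longrightarrow> l \<in> y \<Longrightarrow> m \<in> mor L \<Longrightarrow> prec L m l \<Longrightarrow> m \<in> y"
  unfolding pg_filter_def by blast

lemma pg_filter_directed:
  "pg_filter L y \<Longrightarrow> m \<in> y \<Longrightarrow> n \<in> y \<Longrightarrow> \<exists>l\<in>y. prec L m l \<and> prec L n l"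
  unfolding pg_filter_def by blast

lemma Zset_eq_filters_Int_cylinder: "Zset L m K = filters L \<inter> cylinder (mor L) {m} K"
  by (auto simp: Zset_def filters_def cylinder_def dest: pg_filter_subset_mor)

lemma Zset_Int_mor: "Zset L m (K \<inter> mor L) = Zset L m K"
  by (auto simp: Zset_def filters_def dest: pg_filter_subset_mor)

lemma small_category_cmp:
  assumes "small_category L" "m \<in> mor L" "n \<in> mor L" "src L m = rng L n"
  shows "cmp L m n \<in> mor L" "rng L (cmp L m n) = rng L m" "src L (cmp L m n) = src L n"
  using assms by (simp_all add: small_category_def)

lemma small_category_cmp_assoc:
  assumes "small_category L" "m \<in> mor L" "n \<in> mor L" "k \<in> mor L"
    "src L m = rng L n" "src L n = rng L k"
  shows "cmp L (cmp L m n) k = cmp L m (cmp L n k)"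
  using assms by (simp add: small_category_def)

lemma mem_ext_self:
  assumes "small_category L" "k \<in> mor L"
  shows "k \<in> ext L k"
proof -
  have "idt L (src L k) \<in> mor L" "src L k = rng L (idt L (src L k))"
    "k = cmp L k (idt L (src L k))"
    using assms unfolding small_category_def by simp_all
  then show ?thesis
    unfolding ext_def by blast
qed

lemma prec_trans:
  assumes L: "small_category L" and k: "k \<in> mor L" and "prec L k m" "prec L m l"
  shows "prec L k l"
proof -
  obtain n where n: "n \<in> mor L" "src L k = rng L n" and m: "m = cmp L k n"
    using assms(3) by (auto simp: prec_def ext_def)
  obtain n' where n': "n' \<in> mor L" "src L m = rng L n'" and l: "l = cmp L m n'"
    using assms(4) by (auto simp: prec_def ext_def)
  have nn': "src L n = rng L n'"
    using n' small_category_cmp(3)[OF L k n] m by simp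
  have "l = cmp L k (cmp L n n')"
    using small_category_cmp_assoc[OF L k n(1) n'(1) n(2) nn'] l m by simp
  moreover have "cmp L n n' \<in> mor L" "src L k = rng L (cmp L n n')"
    using small_category_cmp(1,2)[OF L n(1) n'(1) nn'] n(2) by simp_all
  ultimately show ?thesis
    unfolding prec_def ext_def by blast
qed

lemma pg_filter_finite_upper_bound:
  assumes L: "small_category L" and x: "pg_filter L x" and "finite K" "K \<subseteq> x"
  shows "\<exists>m\<in>x. \<forall>k\<in>K. prec L k m"
  using assms(3,4)
proof (induction K rule: finite_induct)
  case empty
  then show ?case
    using x by (auto simp: pg_filter_def)
next
  case (insert k K)
  then obtain m where m: "m \<in> x" "\<forall>k'\<in>K. prec L k' m"
    by auto
  obtain l where l: "l \<in> x" "prec L m l" "prec L k l"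
    using pg_filter_directed[OF x m(1)] insert.prems by blast
  have "prec L k' l" if "k' \<in> K" for k'
  proof -
    have "k' \<in> mor L"
      using pg_filter_subset_mor[OF x] insert.prems that by blast
    then show ?thesis
      using prec_trans[OF L _ _ l(2)] m(2) that by blast
  qed
  with l show ?case
    by blast
qed

lemma pg_filter_mem_iff_meets_ext:
  assumes "small_category L" "pg_filter L y" "k \<in> mor L"
  shows "k \<in> y \<longleftrightarrow> y \<inter> ext L k \<noteq> {}"
proof
  assume "k \<in> y"
  then show "y \<inter> ext L k \<noteq> {}"
    using mem_ext_self[OF assms(1,3)] by blast
next
  assume "y \<inter> ext L k \<noteq> {}"
  then obtain l where "l \<in> y" "prec L k l"
    by (auto simp: prec_def)
  then show "k \<in> y"
    using pg_filter_prec_closed[OF assms(2) _ assms(3)] by blast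
qed

lemma pg_filter_mem_iff_meets_common_ext:
  assumes "pg_filter L y" "m \<in> y" "n \<in> mor L"
  shows "n \<in> y \<longleftrightarrow> y \<inter> (ext L m \<inter> ext L n) \<noteq> {}"
proof
  assume "n \<in> y"
  then obtain l where "l \<in> y" "prec L m l" "prec L n l"
    using pg_filter_directed[OF assms(1,2)] by blast
  then show "y \<inter> (ext L m \<inter> ext L n) \<noteq> {}"
    by (auto simp: prec_def)
next
  assume "y \<inter> (ext L m \<inter> ext L n) \<noteq> {}"
  then obtain l where "l \<in> y" "prec L n l"
    by (auto simp: prec_def)
  then show "n \<in> y"
    using pg_filter_prec_closed[OF assms(1) _ assms(3)] by blast
qed

lemma finitely_aligned_Union:
  assumes "finitely_aligned L" "m \<in> mor L" "finite N" "N \<subseteq> mor L"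
  shows "\<exists>J. finite J \<and> J \<subseteq> mor L \<and> ext L m \<inter> (\<Union>n\<in>N. ext L n) = (\<Union>k\<in>J. ext L k)"
proof -
  have "\<forall>n\<in>N. \<exists>J. finite J \<and> J \<subseteq> mor L \<and> ext L m \<inter> ext L n = (\<Union>k\<in>J. ext L k)"
    using assms(1,2,4) unfolding finitely_aligned_def by blast
  then obtain J where J: "\<And>n. n \<in> N \<Longrightarrow>
      finite (J n) \<and> J n \<subseteq> mor L \<and> ext L m \<inter> ext L n = (\<Union>k\<in>J n. ext L k)"
    by metis
  have "ext L m \<inter> (\<Union>n\<in>N. ext L n) = (\<Union>n\<in>N. ext L m \<inter> ext L n)"
    by blast
  also have "\<dots> = (\<Union>n\<in>N. \<Union>k\<in>J n. ext L k)"
    using J by simp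
  also have "\<dots> = (\<Union>k\<in>(\<Union>n\<in>N. J n). ext L k)"
    by blast
  finally have "ext L m \<inter> (\<Union>n\<in>N. ext L n) = (\<Union>k\<in>(\<Union>n\<in>N. J n). ext L k)" .
  moreover have "finite (\<Union>n\<in>N. J n)" "(\<Union>n\<in>N. J n) \<subseteq> mor L"
    using J assms(3) by auto
  ultimately show ?thesis
    by blast
qed

lemma Zset_eq_if_common_ext_eq:
  assumes L: "small_category L" and N: "N \<subseteq> mor L" and J: "J \<subseteq> mor L"
    and common: "ext L m \<inter> (\<Union>n\<in>N. ext L n) = (\<Union>k\<in>J. ext L k)"
  shows "Zset L m N = Zset L m J"
proof -
  have "y \<inter> N = {} \<longleftrightarrow> y \<inter> J = {}" if y: "pg_filter L y" "m \<in> y" for y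
  proof -
    have "\<forall>n\<in>N. n \<in> y \<longleftrightarrow> y \<inter> (ext L m \<inter> ext L n) \<noteq> {}"
      using pg_filter_mem_iff_meets_common_ext[OF y] N by blast
    then have "y \<inter> N = {} \<longleftrightarrow> y \<inter> (ext L m \<inter> (\<Union>n\<in>N. ext L n)) = {}"
      by blast
    also have "\<dots> \<longleftrightarrow> y \<inter> (\<Union>k\<in>J. ext L k) = {}"
      by (simp only: common)
    also have "\<dots> \<longleftrightarrow> y \<inter> J = {}"
      using pg_filter_mem_iff_meets_ext[OF L y(1)] J by blast
    finally show ?thesis .
  qed
  then show ?thesis
    by (auto simp: Zset_def filters_def)
qed

lemma Zset_eq_Zset_ext:
  assumes L: "small_category L" and fa: "finitely_aligned L" and m: "m \<in> mor L" and "finite N"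
  obtains J where "finite J" "J \<subseteq> ext L m" "Zset L m J = Zset L m N"
proof -
  obtain J where J: "finite J" "J \<subseteq> mor L"
    and common: "ext L m \<inter> (\<Union>n\<in>N \<inter> mor L. ext L n) = (\<Union>k\<in>J. ext L k)"
    using finitely_aligned_Union[OF fa m, of "N \<inter> mor L"] \<open>finite N\<close> by auto
  have "J \<subseteq> ext L m"
  proof
    fix k assume "k \<in> J"
    then have "k \<in> (\<Union>k\<in>J. ext L k)"
      using mem_ext_self[OF L] J(2) by blast
    then show "k \<in> ext L m"
      unfolding common[symmetric] by blast
  qed
  moreover have "Zset L m J = Zset L m N"
    using Zset_eq_if_common_ext_eq[OF L _ J(2) common] by (simp add: Zset_Int_mor)
  ultimately show thesis
    using J(1) that by blast
qed

lemma cylinder_contains_Zset: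
  assumes L: "small_category L" and x: "pg_filter L x"
    and "finite K\<^sub>1" and x_cyl: "x \<in> cylinder (mor L) K\<^sub>1 K\<^sub>2"
  obtains m where "m \<in> mor L" "x \<in> Zset L m K\<^sub>2"
    "Zset L m K\<^sub>2 \<subseteq> filters L \<inter> cylinder (mor L) K\<^sub>1 K\<^sub>2"
proof -
  have K\<^sub>1: "K\<^sub>1 \<subseteq> x" "K\<^sub>1 \<subseteq> mor L" and "x \<inter> K\<^sub>2 = {}"
    using x_cyl by (auto simp: cylinder_def)
  obtain m where m: "m \<in> x" "\<forall>k\<in>K\<^sub>1. prec L k m"
    using pg_filter_finite_upper_bound[OF L x \<open>finite K\<^sub>1\<close> K\<^sub>1(1)] by blast
  have "K\<^sub>1 \<subseteq> y" if "pg_filter L y" "m \<in> y" for y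
    using pg_filter_prec_closed[OF that] m(2) K\<^sub>1(2) by blast
  then have "Zset L m K\<^sub>2 \<subseteq> filters L \<inter> cylinder (mor L) K\<^sub>1 K\<^sub>2"
    by (auto simp: Zset_def filters_def cylinder_def dest: pg_filter_subset_mor)
  moreover have "m \<in> mor L" "x \<in> Zset L m K\<^sub>2"
    using pg_filter_subset_mor[OF x] x m(1) \<open>x \<inter> K\<^sub>2 = {}\<close> by (auto simp: Zset_def filters_def)
  ultimately show thesis
    using that by blast
qed

lemma filtertop_nbhd_contains_Zset:
  assumes L: "small_category L" and fa: "finitely_aligned L"
    and U_open: "openin (filtertop L) U" and "x \<in> U"
  obtains m K where "m \<in> mor L" "finite K" "K \<subseteq> ext L m" "x \<in> Zset L m K" "Zset L m K \<subseteq> U"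
proof -
  obtain V where V: "openin (powtop (mor L)) V" and U: "U = filters L \<inter> V"
    using U_open by (auto simp: filtertop_def openin_subtopology)
  have "x \<in> V" "pg_filter L x"
    using U \<open>x \<in> U\<close> by (simp_all add: filters_def)
  obtain K\<^sub>1 K\<^sub>2 where K: "finite K\<^sub>1" "finite K\<^sub>2"
    "x \<in> cylinder (mor L) K\<^sub>1 K\<^sub>2" "cylinder (mor L) K\<^sub>1 K\<^sub>2 \<subseteq> V"
    by (rule powtop_cylinder_nbhd[OF V \<open>x \<in> V\<close>])
  obtain m where m: "m \<in> mor L" "x \<in> Zset L m K\<^sub>2"
    "Zset L m K\<^sub>2 \<subseteq> filters L \<inter> cylinder (mor L) K\<^sub>1 K\<^sub>2"
    by (rule cylinder_contains_Zset[OF L \<open>pg_filter L x\<close> K(1,3)])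
  obtain J where J: "finite J" "J \<subseteq> ext L m" "Zset L m J = Zset L m K\<^sub>2"
    by (rule Zset_eq_Zset_ext[OF L fa m(1) K(2)])
  have "Zset L m J \<subseteq> U"
    using J(3) m(3) K(4) U by blast
  with m(1,2) J show thesis
    by (intro that[of m J]) simp_all
qed

theorem lemma6p2:
  fixes G :: "('q, 'b) monoid_scheme" and P :: "'q set"
    and L :: "('o, 'a, 'q, 'c) pgraph_scheme"
  assumes "wqlo G P" and "P_graph G P L" and "finitely_aligned L"
  shows "openin (filtertop L) =
    arbitrary union_of (\<lambda>U. \<exists>m K. m \<in> mor L \<and> finite K \<and> K \<subseteq> ext L m \<and> U = Zset L m K)"
  unfolding openin_topology_base_unique
proof (intro conjI allI impI)
  have L: "small_category L"
    using assms(2) by (simp add: P_graph_def)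
  show "openin (filtertop L) V"
    if "\<exists>m K. m \<in> mor L \<and> finite K \<and> K \<subseteq> ext L m \<and> V = Zset L m K" for V
    using that unfolding Zset_eq_filters_Int_cylinder filtertop_def
    by (auto intro!: openin_subtopology_Int2 openin_powtop_cylinder)
  fix U x
  assume "openin (filtertop L) U \<and> x \<in> U"
  then obtain m K where "m \<in> mor L" "finite K" "K \<subseteq> ext L m" "x \<in> Zset L m K" "Zset L m K \<subseteq> U"
    using filtertop_nbhd_contains_Zset[OF L assms(3)] by blast
  then show "\<exists>V. (\<exists>m K. m \<in> mor L \<and> finite K \<and> K \<subseteq> ext L m \<and> V = Zset L m K) \<and> x \<in> V \<and> V \<subseteq> U"
    by blast
qed

end
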